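(* Let $G$ be a digraph and $\mathbb F$ a field, and for sheaves $\mathcal F$ of finite-dimensional $\mathbb F$-vector spaces on $G$ put $\alpha_1(\mathcal F)={\rm m.e.}(\mathcal F)$ and $\alpha_0(\mathcal F)=\chi(\mathcal F)+{\rm m.e.}(\mathcal F)$. Then $\alpha_0,\alpha_1$ take non-negative values; $\alpha_i(\mathcal F_1\oplus\mathcal F_2)=\alpha_i(\mathcal F_1)+\alpha_i(\mathcal F_2)$ for $i=0,1$; and for every short exact sequence $0\to\mathcal F_1\to\mathcal F_2\to\mathcal F_3\to0$ of sheaves on $G$ the sequence $$0,\ \alpha_1(\mathcal F_1),\ \alpha_1(\mathcal F_2),\ \alpha_1(\mathcal F_3),\ \alpha_0(\mathcal F_1),\ \alpha_0(\mathcal F_2),\ \alpha_0(\mathcal F_3),\ 0$$ is triangular, i.e. each term other than the first and last is at most the sum of its two neighbours. (That is, the maximum excess is a first quasi-Betti number.)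
   Context: Digraphs (finite, multiple edges and loops allowed) and sheaves $\mathcal F$ on them: finite-dimensional $\mathbb F$-vector spaces $\mathcal F(P)$, $P\in V_G\sqcup E_G$, with linear maps $\mathcal F(t,e)\colon\mathcal F(e)\to\mathcal F(t_Ge)$, $\mathcal F(h,e)\colon\mathcal F(e)\to\mathcal F(h_Ge)$. $\mathcal F(V)=\bigoplus_v\mathcal F(v)$, $\mathcal F(E)=\bigoplus_e\mathcal F(e)$, $\chi(\mathcal F)=\dim\mathcal F(V)-\dim\mathcal F(E)$; $d_h,d_t\colon\mathcal F(E)\to\mathcal F(V)$ send the summand $\mathcal F(e)$ into $\mathcal F(h_Ge)$, resp. $\mathcal F(t_Ge)$, via the restriction maps. For a subspace $U\subset\mathcal F(V)$, $\Gamma_{\rm ht}(U)=\bigoplus_{e}\{w\in\mathcal F(e):d_hw\in U,\ d_tw\in U\}$, ${\rm excess}(\mathcal F,U)=\dim\Gamma_{\rm ht}(U)-\dim U$, ${\rm m.e.}(\mathcal F)=\max_U{\rm excess}(\mathcal F,U)$. A morphism of sheaves $\alpha\colon\mathcal F\to\mathcal G$ is a family of linear maps $\alpha_P\colon\mathcal F(P)\to\mathcal G(P)$ with $\mathcal G(t,e)\alpha_e=\alpha_{te}\mathcal F(t,e)$ and $\mathcal G(h,e)\alpha_e=\alpha_{he}\mathcal F(h,e)$; direct sums are taken valuewise, and a sequence of sheaves is exact iff it is exact at every $P\in V_G\sqcup E_G$. *)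

theory Defs
  imports Complex_Main "HOL-Library.Function_Algebras" "Graph_Theory.Digraph"
begin

text \<open>A finite-dimensional F-vector space of dimension n is modelled as
  F^n = functions nat => F vanishing from index n on.  A linear map F^n -> F^m
  is given by a matrix M (entries M i j, i < m, j < n).\<close>

definition cspace :: "nat \<Rightarrow> (nat \<Rightarrow> 'a::zero) set" where
  "cspace n = {x. \<forall>i\<ge>n. x i = 0}"

definition lin :: "nat \<Rightarrow> nat \<Rightarrow> (nat \<Rightarrow> nat \<Rightarrow> 'a::comm_ring) \<Rightarrow> (nat \<Rightarrow> 'a) \<Rightarrow> (nat \<Rightarrow> 'a)" where
  "lin m n M x = (\<lambda>i. if i < m then (\<Sum>j<n. M i j * x j) else 0)"

definition fscale :: "'a::field \<Rightarrow> ('b \<Rightarrow> nat \<Rightarrow> 'a) \<Rightarrow> ('b \<Rightarrow> nat \<Rightarrow> 'a)" where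
  "fscale c x = (\<lambda>b i. c * x b i)"

abbreviation fdim :: "('b \<Rightarrow> nat \<Rightarrow> 'a::field) set \<Rightarrow> nat" where
  "fdim S \<equiv> vector_space.dim fscale S"

abbreviation fsubspace :: "('b \<Rightarrow> nat \<Rightarrow> 'a::field) set \<Rightarrow> bool" where
  "fsubspace S \<equiv> module.subspace fscale S"

text \<open>A sheaf: F(v) = F^(sv v), F(e) = F^(se e), restriction maps
  F(t,e) : F(e) -> F(tail e) with matrix st e and F(h,e) : F(e) -> F(head e)
  with matrix sh e.\<close>

record ('v,'e,'a) sheaf =
  sv :: "'v \<Rightarrow> nat"
  se :: "'e \<Rightarrow> nat"
  st :: "'e \<Rightarrow> nat \<Rightarrow> nat \<Rightarrow> 'a"
  sh :: "'e \<Rightarrow> nat \<Rightarrow> nat \<Rightarrow> 'a"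

definition resT :: "('v,'e) pre_digraph \<Rightarrow> ('v,'e,'a::comm_ring) sheaf \<Rightarrow> 'e \<Rightarrow> (nat \<Rightarrow> 'a) \<Rightarrow> (nat \<Rightarrow> 'a)" where
  "resT G F e = lin (sv F (tail G e)) (se F e) (st F e)"

definition resH :: "('v,'e) pre_digraph \<Rightarrow> ('v,'e,'a::comm_ring) sheaf \<Rightarrow> 'e \<Rightarrow> (nat \<Rightarrow> 'a) \<Rightarrow> (nat \<Rightarrow> 'a)" where
  "resH G F e = lin (sv F (head G e)) (se F e) (sh F e)"

definition secV :: "('v,'e) pre_digraph \<Rightarrow> ('v,'e,'a::field) sheaf \<Rightarrow> ('v \<Rightarrow> nat \<Rightarrow> 'a) set" where
  "secV G F = {x. \<forall>v. (v \<in> verts G \<longrightarrow> x v \<in> cspace (sv F v)) \<and> (v \<notin> verts G \<longrightarrow> x v = 0)}"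

definition secE :: "('v,'e) pre_digraph \<Rightarrow> ('v,'e,'a::field) sheaf \<Rightarrow> ('e \<Rightarrow> nat \<Rightarrow> 'a) set" where
  "secE G F = {x. \<forall>e. (e \<in> arcs G \<longrightarrow> x e \<in> cspace (se F e)) \<and> (e \<notin> arcs G \<longrightarrow> x e = 0)}"

definition euler_char :: "('v,'e) pre_digraph \<Rightarrow> ('v,'e,'a) sheaf \<Rightarrow> int" where
  "euler_char G F = int (\<Sum>v\<in>verts G. sv F v) - int (\<Sum>e\<in>arcs G. se F e)"

definition d_h :: "('v,'e) pre_digraph \<Rightarrow> ('v,'e,'a::field) sheaf \<Rightarrow> ('e \<Rightarrow> nat \<Rightarrow> 'a) \<Rightarrow> ('v \<Rightarrow> nat \<Rightarrow> 'a)" where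
  "d_h G F x = (\<lambda>v. if v \<in> verts G then (\<Sum>e\<in>{e\<in>arcs G. head G e = v}. resH G F e (x e)) else 0)"

definition d_t :: "('v,'e) pre_digraph \<Rightarrow> ('v,'e,'a::field) sheaf \<Rightarrow> ('e \<Rightarrow> nat \<Rightarrow> 'a) \<Rightarrow> ('v \<Rightarrow> nat \<Rightarrow> 'a)" where
  "d_t G F x = (\<lambda>v. if v \<in> verts G then (\<Sum>e\<in>{e\<in>arcs G. tail G e = v}. resT G F e (x e)) else 0)"

definition emb :: "'e \<Rightarrow> (nat \<Rightarrow> 'a::zero) \<Rightarrow> ('e \<Rightarrow> nat \<Rightarrow> 'a)" where
  "emb e w = (\<lambda>e'. if e' = e then w else 0)"

definition gamma_ht :: "('v,'e) pre_digraph \<Rightarrow> ('v,'e,'a::field) sheaf \<Rightarrow> ('v \<Rightarrow> nat \<Rightarrow> 'a) set \<Rightarrow> ('e \<Rightarrow> nat \<Rightarrow> 'a) set" where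
  "gamma_ht G F U = {x \<in> secE G F. \<forall>e\<in>arcs G. d_h G F (emb e (x e)) \<in> U \<and> d_t G F (emb e (x e)) \<in> U}"

definition excess :: "('v,'e) pre_digraph \<Rightarrow> ('v,'e,'a::field) sheaf \<Rightarrow> ('v \<Rightarrow> nat \<Rightarrow> 'a) set \<Rightarrow> int" where
  "excess G F U = int (fdim (gamma_ht G F U)) - int (fdim U)"

definition max_excess :: "('v,'e) pre_digraph \<Rightarrow> ('v,'e,'a::field) sheaf \<Rightarrow> int" where
  "max_excess G F = Max {excess G F U | U. fsubspace U \<and> U \<subseteq> secV G F}"

definition alpha1 :: "('v,'e) pre_digraph \<Rightarrow> ('v,'e,'a::field) sheaf \<Rightarrow> int" where
  "alpha1 G F = max_excess G F"

definition alpha0 :: "('v,'e) pre_digraph \<Rightarrow> ('v,'e,'a::field) sheaf \<Rightarrow> int" where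
  "alpha0 G F = euler_char G F + max_excess G F"

definition blockdiag :: "nat \<Rightarrow> nat \<Rightarrow> (nat \<Rightarrow> nat \<Rightarrow> 'a::zero) \<Rightarrow> (nat \<Rightarrow> nat \<Rightarrow> 'a) \<Rightarrow> (nat \<Rightarrow> nat \<Rightarrow> 'a)" where
  "blockdiag m1 n1 A B = (\<lambda>i j. if i < m1 \<and> j < n1 then A i j
      else if m1 \<le> i \<and> n1 \<le> j then B (i - m1) (j - n1) else 0)"

definition sheaf_sum :: "('v,'e) pre_digraph \<Rightarrow> ('v,'e,'a::zero) sheaf \<Rightarrow> ('v,'e,'a) sheaf \<Rightarrow> ('v,'e,'a) sheaf" where
  "sheaf_sum G F1 F2 =
     \<lparr> sv = (\<lambda>v. sv F1 v + sv F2 v),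
       se = (\<lambda>e. se F1 e + se F2 e),
       st = (\<lambda>e. blockdiag (sv F1 (tail G e)) (se F1 e) (st F1 e) (st F2 e)),
       sh = (\<lambda>e. blockdiag (sv F1 (head G e)) (se F1 e) (sh F1 e) (sh F2 e)) \<rparr>"

record ('v,'e,'a) sheaf_mor =
  mor_v :: "'v \<Rightarrow> nat \<Rightarrow> nat \<Rightarrow> 'a"
  mor_e :: "'e \<Rightarrow> nat \<Rightarrow> nat \<Rightarrow> 'a"

definition morV :: "('v,'e,'a::comm_ring) sheaf \<Rightarrow> ('v,'e,'a) sheaf \<Rightarrow> ('v,'e,'a) sheaf_mor \<Rightarrow> 'v \<Rightarrow> (nat \<Rightarrow> 'a) \<Rightarrow> (nat \<Rightarrow> 'a)" where
  "morV F H a v = lin (sv H v) (sv F v) (mor_v a v)"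

definition morE :: "('v,'e,'a::comm_ring) sheaf \<Rightarrow> ('v,'e,'a) sheaf \<Rightarrow> ('v,'e,'a) sheaf_mor \<Rightarrow> 'e \<Rightarrow> (nat \<Rightarrow> 'a) \<Rightarrow> (nat \<Rightarrow> 'a)" where
  "morE F H a e = lin (se H e) (se F e) (mor_e a e)"

definition is_sheaf_mor :: "('v,'e) pre_digraph \<Rightarrow> ('v,'e,'a::field) sheaf \<Rightarrow> ('v,'e,'a) sheaf \<Rightarrow> ('v,'e,'a) sheaf_mor \<Rightarrow> bool" where
  "is_sheaf_mor G F H a \<longleftrightarrow>
     (\<forall>e\<in>arcs G. \<forall>w\<in>cspace (se F e).
        resT G H e (morE F H a e w) = morV F H a (tail G e) (resT G F e w) \<and>
        resH G H e (morE F H a e w) = morV F H a (head G e) (resH G F e w))"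

definition short_exact_lin :: "nat \<Rightarrow> nat \<Rightarrow> nat \<Rightarrow> ((nat \<Rightarrow> 'a::field) \<Rightarrow> (nat \<Rightarrow> 'a)) \<Rightarrow> ((nat \<Rightarrow> 'a) \<Rightarrow> (nat \<Rightarrow> 'a)) \<Rightarrow> bool" where
  "short_exact_lin n1 n2 n3 A B \<longleftrightarrow>
     inj_on A (cspace n1) \<and>
     A ` cspace n1 = {y \<in> cspace n2. B y = 0} \<and>
     B ` cspace n2 = cspace n3"

definition short_exact :: "('v,'e) pre_digraph \<Rightarrow> ('v,'e,'a::field) sheaf \<Rightarrow> ('v,'e,'a) sheaf \<Rightarrow> ('v,'e,'a) sheaf
     \<Rightarrow> ('v,'e,'a) sheaf_mor \<Rightarrow> ('v,'e,'a) sheaf_mor \<Rightarrow> bool" where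
  "short_exact G F1 F2 F3 a b \<longleftrightarrow>
     is_sheaf_mor G F1 F2 a \<and> is_sheaf_mor G F2 F3 b \<and>
     (\<forall>v\<in>verts G. short_exact_lin (sv F1 v) (sv F2 v) (sv F3 v) (morV F1 F2 a v) (morV F2 F3 b v)) \<and>
     (\<forall>e\<in>arcs G. short_exact_lin (se F1 e) (se F2 e) (se F3 e) (morE F1 F2 a e) (morE F2 F3 b e))"

definition triangular :: "int list \<Rightarrow> bool" where
  "triangular xs \<longleftrightarrow> (\<forall>i. 0 < i \<and> i + 1 < length xs \<longrightarrow> xs ! i \<le> xs ! (i - 1) + xs ! (i + 1))"

end

theory Submission
  imports Defs
begin

(* Encode a sheaf on G as a "linear incidence system": a vertex space
   SV = F(V), an edge space SE = F(E) and linear boundary maps phi_k : SE -> SV, one for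
   each pair k = (e, head/tail); then Gamma_ht(U) = {x in SE. phi_k x in U for all k}.
   For a short exact sequence 0 -> F1 -A-> F2 -B-> F3 -> 0 of such systems, rank-nullity
   applied at the vertex and at the edge level gives, for every subspace U of F2(V),
     exc_2(U) = exc_1(A^-1 U) + dim B(Gamma_2 U) - dim B(U).
   Choosing U as the image of an optimal subspace, as an optimal subspace itself, or as
   the preimage of an optimal subspace of F3(V), this identity yields monotonicity,
   subadditivity and the quotient bound m.e.(F3) <= m.e.(F2) + chi(F1); for split
   sequences (direct sums) a section gives the reverse of subadditivity.  Together with
   m.e. >= max(0, -chi) and additivity of chi these are exactly the claimed properties. *)

section \<open>Finite-dimensional subspaces and rank--nullity\<close>

text \<open>The coordinate spaces of the statement are infinite-dimensional ambient spaces, so we work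
  with subspaces spanned by a finite set.  Inside the locale the constant is written
  \<open>local.fin_dim\<close> to avoid the homonymous constant of the global real-vector interpretation.\<close>

context vector_space
begin

definition fin_dim :: "'b set \<Rightarrow> bool" where
  "fin_dim S \<longleftrightarrow> (\<exists>C. finite C \<and> S \<subseteq> span C)"

lemma fin_dim_subset: "local.fin_dim S \<Longrightarrow> T \<subseteq> S \<Longrightarrow> local.fin_dim T"
  unfolding local.fin_dim_def by (meson subset_trans)

lemma fin_dim_basis:
  fixes S :: "'b set"
  assumes "local.fin_dim S"
  obtains B where "finite B" "B \<subseteq> S" "independent B" "S \<subseteq> span B" "card B = dim S"
proof -
  obtain B where B: "B \<subseteq> S" "independent B" "S \<subseteq> span B" "card B = dim S"
    by (rule basis_exists)
  obtain C where C: "finite C" "S \<subseteq> span C" using assms unfolding local.fin_dim_def by (elim exE conjE)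
  have "B \<subseteq> span C" using B(1) C(2) by (rule subset_trans)
  then have "finite B" using independent_span_bound[OF C(1) B(2)] by simp
  with B show ?thesis by (intro that)
qed

lemma dim_le_fin_dim:
  fixes S :: "'b set"
  assumes "local.fin_dim S" "T \<subseteq> S" shows "dim T \<le> dim S"
proof -
  obtain B where B: "finite B" "S \<subseteq> span B" "card B = dim S"
    using fin_dim_basis[OF assms(1)] by metis
  have "T \<subseteq> span B" using assms(2) B(2) by (rule subset_trans)
  then show ?thesis using dim_le_card[OF _ B(1)] B(3) by simp
qed

lemma span_disjoint_parts_zero:
  assumes B: "independent B" "finite B" and A: "A1 \<subseteq> B" "A2 \<subseteq> B" "A1 \<inter> A2 = {}"
    and x: "x \<in> span A1" "x \<in> span A2"
  shows "x = 0"
proof -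
  have fin: "finite A1" "finite A2" using A(1,2) B(2) by (simp_all add: finite_subset)
  obtain u where u: "(\<Sum>v\<in>A1. u v *s v) = x" using x(1) span_finite[OF fin(1)] by auto
  obtain w where w: "(\<Sum>v\<in>A2. w v *s v) = x" using x(2) span_finite[OF fin(2)] by auto
  define c where "c v = (if v \<in> A1 then u v else - w v)" for v
  have "(\<Sum>v\<in>A1 \<union> A2. c v *s v) = (\<Sum>v\<in>A1. c v *s v) + (\<Sum>v\<in>A2. c v *s v)"
    using fin A(3) by (rule sum.union_disjoint)
  also have "(\<Sum>v\<in>A1. c v *s v) = x" using u by (simp add: c_def)
  also have "(\<Sum>v\<in>A2. c v *s v) = (\<Sum>v\<in>A2. - (w v *s v))"
    using A(3) by (intro sum.cong) (auto simp: c_def scale_minus_left)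
  also have "\<dots> = - x" using w by (simp add: sum_negf)
  finally have "(\<Sum>v\<in>A1 \<union> A2. c v *s v) = 0" by simp
  then have "c v = 0" if "v \<in> A1" for v
    using independentD[OF B(1), of "A1 \<union> A2" c v] fin A(1,2) that by simp
  then show "x = 0" using u by (simp add: c_def)
qed

lemma dim_zero: "dim {0} = 0"
  using dim_eq_card[of "{}" "{0}"] independent_empty by simp

end

context vector_space_pair
begin

text \<open>Rank--nullity for a linear map on a finite-dimensional subspace: extend a basis of the
  kernel to a basis of \<open>S\<close>; the new vectors map injectively onto a basis of the image.\<close>
lemma rank_nullity:
  assumes f: "Vector_Spaces.linear s1 s2 f" and S: "vs1.subspace S" "vs1.fin_dim S"
  shows "vs1.dim S = vs2.dim (f ` S) + vs1.dim {x\<in>S. f x = 0}"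
proof -
  define K where "K = {x\<in>S. f x = 0}"
  have K: "vs1.subspace K" "K \<subseteq> S"
    using vs1.subspace_inter[OF S(1) linear_subspace_kernel[OF f]] by (simp_all add: K_def Int_def)
  obtain BK where BK: "BK \<subseteq> K" "vs1.independent BK" "K \<subseteq> vs1.span BK" "card BK = vs1.dim K"
    by (rule vs1.basis_exists)
  obtain B where B: "BK \<subseteq> B" "B \<subseteq> S" "vs1.independent B" "S \<subseteq> vs1.span B"
    by (rule vs1.maximal_independent_subset_extend[OF subset_trans[OF BK(1) K(2)] BK(2)])
  obtain C0 where C0: "finite C0" "S \<subseteq> vs1.span C0" using S(2) unfolding vs1.fin_dim_def by (elim exE conjE)
  have finB: "finite B" using vs1.independent_span_bound[OF C0(1) B(3) subset_trans[OF B(2) C0(2)]] by simp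
  define C where "C = B - BK"
  have BC: "B = BK \<union> C" "BK \<inter> C = {}" "finite BK" "finite C"
    using B(1) finB by (auto simp: C_def finite_subset)
  have "C \<subseteq> S" using B(2) by (auto simp: C_def)
  then have spanC: "vs1.span C \<subseteq> S" using vs1.span_minimal[OF _ S(1)] by simp
  have "x = 0" if x: "x \<in> vs1.span C" "f x = 0" for x
  proof -
    have "x \<in> vs1.span BK" using x spanC BK(3) by (auto simp: K_def)
    then show "x = 0" using vs1.span_disjoint_parts_zero[OF B(3) finB B(1) _ BC(2)] x(1) by (simp add: C_def)
  qed
  then have inj: "inj_on f (vs1.span C)"
    using linear_inj_on_iff_eq_0[OF f vs1.subspace_span] by simp
  have indC: "vs2.independent (f ` C)"
    using linear_independent_injective_image[OF f vs1.independent_mono[OF B(3)] inj] by (simp add: C_def)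
  have cardC: "card (f ` C) = card C"
    using card_image[OF inj_on_subset[OF inj vs1.span_superset]] .
  have "f ` S \<subseteq> vs2.span (f ` C)"
  proof
    fix y assume "y \<in> f ` S"
    then obtain x where x: "x \<in> S" "y = f x" by auto
    then have "x \<in> vs1.span (BK \<union> C)" using B(4) BC(1) by auto
    then obtain a b where ab: "x = a + b" "a \<in> vs1.span BK" "b \<in> vs1.span C"
      unfolding vs1.span_Un by auto
    have "f a = 0" using ab(2) vs1.span_minimal[OF BK(1) K(1)] by (auto simp: K_def)
    then have "y = f b" using ab x linear_add[OF f] by simp
    then show "y \<in> vs2.span (f ` C)" using linear_span_image[OF f] ab(3) by auto
  qed
  moreover have "f ` C \<subseteq> f ` S" using B(2) by (auto simp: C_def)
  ultimately have "vs2.dim (f ` S) = card C"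
    using vs2.basis_card_eq_dim[OF _ _ indC] cardC by simp
  moreover have "vs1.dim S = card BK + card C"
    using vs1.basis_card_eq_dim[OF B(2,4,3)] card_Un_disjoint[OF BC(3,4,2)] BC(1) by simp
  ultimately show ?thesis using BK(4) by (simp add: K_def)
qed

lemma dim_image_inj:
  assumes f: "Vector_Spaces.linear s1 s2 f" and S: "vs1.subspace S" "vs1.fin_dim S"
    and inj: "\<And>x. x \<in> S \<Longrightarrow> f x = 0 \<Longrightarrow> x = 0"
  shows "vs2.dim (f ` S) = vs1.dim S"
proof -
  have "{x\<in>S. f x = 0} = {0}"
    using inj vs1.subspace_0[OF S(1)] linear_0[OF f] by auto
  then show ?thesis using rank_nullity[OF f S] vs1.dim_zero by simp
qed

end

definition exact_on :: "'b::zero set \<Rightarrow> 'c::zero set \<Rightarrow> 'd::zero set \<Rightarrow> ('b \<Rightarrow> 'c) \<Rightarrow> ('c \<Rightarrow> 'd) \<Rightarrow> bool" where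
  "exact_on S1 S2 S3 A B \<longleftrightarrow>
     (\<forall>x\<in>S1. A x = 0 \<longrightarrow> x = 0) \<and> A ` S1 = {y\<in>S2. B y = 0} \<and> B ` S2 = S3"

context vector_space
begin

lemma vector_space_pair_self: "vector_space_pair scale scale"
  by unfold_locales

lemma exact_on_inj:
  assumes A: "Vector_Spaces.linear scale scale A" and ex: "exact_on S1 S2 S3 A B"
    and S1: "subspace S1" and xy: "x \<in> S1" "y \<in> S1" "A x = A y"
  shows "x = y"
proof -
  interpret pair: vector_space_pair scale scale by (rule vector_space_pair_self)
  have "A (x - y) = 0" using xy(3) pair.linear_diff[OF A] by simp
  moreover have "x - y \<in> S1" using S1 xy(1,2) by (rule subspace_diff)
  ultimately have "x - y = 0" using ex unfolding exact_on_def by blast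
  then show "x = y" by simp
qed

text \<open>In an exact sequence, a subspace \<open>U\<close> of the middle term splits dimensionwise into its
  image under \<open>B\<close> and its preimage under \<open>A\<close> (which is identified with \<open>U \<inter> ker B\<close>).\<close>
lemma exact_dim_preimage:
  assumes A: "Vector_Spaces.linear scale scale A" and B: "Vector_Spaces.linear scale scale B"
    and ex: "exact_on S1 S2 S3 A B" and S1: "subspace S1" "local.fin_dim S1"
    and U: "subspace U" "local.fin_dim U" "U \<subseteq> S2"
  shows "dim U = dim (B ` U) + dim {x\<in>S1. A x \<in> U}"
proof -
  interpret pair: vector_space_pair scale scale by (rule vector_space_pair_self)
  define P where "P = {x\<in>S1. A x \<in> U}"
  have P: "subspace P" "local.fin_dim P"
    using subspace_inter[OF S1(1) pair.linear_subspace_vimage[OF A U(1)]]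
      fin_dim_subset[OF S1(2)] by (auto simp: P_def Int_def)
  have "{x\<in>U. B x = 0} = A ` P"
    using ex U(3) by (auto simp: exact_on_def P_def)
  moreover have "dim (A ` P) = dim P"
    using pair.dim_image_inj[OF A P] ex by (auto simp: exact_on_def P_def)
  ultimately show ?thesis
    using pair.rank_nullity[OF B U(1,2)] by (simp add: P_def)
qed

lemma exact_dim_additive:
  assumes A: "Vector_Spaces.linear scale scale A" and B: "Vector_Spaces.linear scale scale B"
    and ex: "exact_on S1 S2 S3 A B" and S1: "subspace S1" "local.fin_dim S1"
    and S2: "subspace S2" "local.fin_dim S2"
  shows "dim S2 = dim S1 + dim S3"
proof -
  have "{x\<in>S1. A x \<in> S2} = S1" "B ` S2 = S3" using ex by (auto simp: exact_on_def)
  then show ?thesis using exact_dim_preimage[OF A B ex S1 S2 order_refl] by simp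
qed

end

section \<open>Linear incidence systems and their maximum excess\<close>

lemma vector_space_fscale: "vector_space (fscale :: 'a::field \<Rightarrow> ('b \<Rightarrow> nat \<Rightarrow> 'a) \<Rightarrow> _)"
  unfolding vector_space_def module_def fscale_def
  by (auto simp: fun_eq_iff algebra_simps)

global_interpretation FS: vector_space "fscale :: 'a::field \<Rightarrow> ('b \<Rightarrow> nat \<Rightarrow> 'a) \<Rightarrow> _"
  by (rule vector_space_fscale)

abbreviation flin :: "(('b \<Rightarrow> nat \<Rightarrow> 'a::field) \<Rightarrow> ('c \<Rightarrow> nat \<Rightarrow> 'a)) \<Rightarrow> bool" where
  "flin f \<equiv> Vector_Spaces.linear fscale fscale f"

lemma flinI:
  fixes f :: "('b \<Rightarrow> nat \<Rightarrow> 'a::field) \<Rightarrow> ('c \<Rightarrow> nat \<Rightarrow> 'a)"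
  assumes "\<And>x y. f (x + y) = f x + f y" "\<And>c x. f (fscale c x) = fscale c (f x)"
  shows "flin f"
  using assms by (auto simp: Vector_Spaces.linear_iff intro: vector_space_fscale)

lemma flinD:
  fixes f :: "('b \<Rightarrow> nat \<Rightarrow> 'a::field) \<Rightarrow> ('c \<Rightarrow> nat \<Rightarrow> 'a)"
  assumes "flin f"
  shows "f (x + y) = f x + f y" "f (fscale c x) = fscale c (f x)" "f 0 = 0"
proof -
  interpret L: Vector_Spaces.linear fscale fscale f by fact
  show "f (x + y) = f x + f y" "f (fscale c x) = fscale c (f x)" "f 0 = 0"
    by (simp_all add: L.add L.scale)
qed

definition Gamma :: "'k set \<Rightarrow> ('k \<Rightarrow> ('y \<Rightarrow> nat \<Rightarrow> 'a::field) \<Rightarrow> ('x \<Rightarrow> nat \<Rightarrow> 'a))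
    \<Rightarrow> ('y \<Rightarrow> nat \<Rightarrow> 'a) set \<Rightarrow> ('x \<Rightarrow> nat \<Rightarrow> 'a) set \<Rightarrow> ('y \<Rightarrow> nat \<Rightarrow> 'a) set" where
  "Gamma K \<phi> SE U = {x\<in>SE. \<forall>k\<in>K. \<phi> k x \<in> U}"

definition exc :: "'k set \<Rightarrow> ('k \<Rightarrow> ('y \<Rightarrow> nat \<Rightarrow> 'a::field) \<Rightarrow> ('x \<Rightarrow> nat \<Rightarrow> 'a))
    \<Rightarrow> ('y \<Rightarrow> nat \<Rightarrow> 'a) set \<Rightarrow> ('x \<Rightarrow> nat \<Rightarrow> 'a) set \<Rightarrow> int" where
  "exc K \<phi> SE U = int (FS.dim (Gamma K \<phi> SE U)) - int (FS.dim U)"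

definition maxexc :: "'k set \<Rightarrow> ('k \<Rightarrow> ('y \<Rightarrow> nat \<Rightarrow> 'a::field) \<Rightarrow> ('x \<Rightarrow> nat \<Rightarrow> 'a))
    \<Rightarrow> ('x \<Rightarrow> nat \<Rightarrow> 'a) set \<Rightarrow> ('y \<Rightarrow> nat \<Rightarrow> 'a) set \<Rightarrow> int" where
  "maxexc K \<phi> SV SE = Max {exc K \<phi> SE U | U. FS.subspace U \<and> U \<subseteq> SV}"

definition incidence_system :: "'k set \<Rightarrow> ('k \<Rightarrow> ('y \<Rightarrow> nat \<Rightarrow> 'a::field) \<Rightarrow> ('x \<Rightarrow> nat \<Rightarrow> 'a))
    \<Rightarrow> ('x \<Rightarrow> nat \<Rightarrow> 'a) set \<Rightarrow> ('y \<Rightarrow> nat \<Rightarrow> 'a) set \<Rightarrow> bool" where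
  "incidence_system K \<phi> SV SE \<longleftrightarrow>
     FS.subspace SV \<and> FS.fin_dim SV \<and> FS.subspace SE \<and> FS.fin_dim SE \<and>
     (\<forall>k\<in>K. flin (\<phi> k) \<and> (\<forall>x\<in>SE. \<phi> k x \<in> SV))"

definition incidence_mor :: "'k set
    \<Rightarrow> ('k \<Rightarrow> ('y \<Rightarrow> nat \<Rightarrow> 'a::field) \<Rightarrow> ('x \<Rightarrow> nat \<Rightarrow> 'a)) \<Rightarrow> ('x \<Rightarrow> nat \<Rightarrow> 'a) set \<Rightarrow> ('y \<Rightarrow> nat \<Rightarrow> 'a) set
    \<Rightarrow> ('k \<Rightarrow> ('y \<Rightarrow> nat \<Rightarrow> 'a) \<Rightarrow> ('x \<Rightarrow> nat \<Rightarrow> 'a)) \<Rightarrow> ('x \<Rightarrow> nat \<Rightarrow> 'a) set \<Rightarrow> ('y \<Rightarrow> nat \<Rightarrow> 'a) set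
    \<Rightarrow> (('x \<Rightarrow> nat \<Rightarrow> 'a) \<Rightarrow> ('x \<Rightarrow> nat \<Rightarrow> 'a)) \<Rightarrow> (('y \<Rightarrow> nat \<Rightarrow> 'a) \<Rightarrow> ('y \<Rightarrow> nat \<Rightarrow> 'a)) \<Rightarrow> bool" where
  "incidence_mor K \<phi>1 SV1 SE1 \<phi>2 SV2 SE2 AV AE \<longleftrightarrow>
     flin AV \<and> flin AE \<and> AV ` SV1 \<subseteq> SV2 \<and> AE ` SE1 \<subseteq> SE2 \<and>
     (\<forall>k\<in>K. \<forall>x\<in>SE1. \<phi>2 k (AE x) = AV (\<phi>1 k x))"

lemma Gamma_subspace:
  assumes sys: "incidence_system K \<phi> SV SE" and U: "FS.subspace U"
  shows "FS.subspace (Gamma K \<phi> SE U)"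
proof -
  have SE: "FS.subspace SE" and L: "\<And>k. k \<in> K \<Longrightarrow> flin (\<phi> k)"
    using sys by (auto simp: incidence_system_def)
  show ?thesis
  proof (rule FS.subspaceI)
    show "0 \<in> Gamma K \<phi> SE U"
      using FS.subspace_0[OF SE] FS.subspace_0[OF U] flinD(3)[OF L] by (simp add: Gamma_def)
  next
    fix x y assume "x \<in> Gamma K \<phi> SE U" "y \<in> Gamma K \<phi> SE U"
    then show "x + y \<in> Gamma K \<phi> SE U"
      using FS.subspace_add[OF SE] FS.subspace_add[OF U] flinD(1)[OF L] by (simp add: Gamma_def)
  next
    fix c x assume "x \<in> Gamma K \<phi> SE U"
    then show "fscale c x \<in> Gamma K \<phi> SE U"
      using FS.subspace_scale[OF SE] FS.subspace_scale[OF U] flinD(2)[OF L] by (simp add: Gamma_def)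
  qed
qed

lemma Gamma_subset: "Gamma K \<phi> SE U \<subseteq> SE"
  by (auto simp: Gamma_def)

lemma Gamma_fin_dim:
  assumes "incidence_system K \<phi> SV SE" shows "FS.fin_dim (Gamma K \<phi> SE U)"
proof -
  have "FS.fin_dim SE" using assms by (simp add: incidence_system_def)
  then show ?thesis using Gamma_subset by (rule FS.fin_dim_subset)
qed

lemma Gamma_whole: "incidence_system K \<phi> SV SE \<Longrightarrow> Gamma K \<phi> SE SV = SE"
  by (auto simp: incidence_system_def Gamma_def)

text \<open>The excess is bounded by the dimensions of \<open>SE\<close> and \<open>SV\<close>, so the maximum exists
  and is attained.\<close>
lemma maxexc_attained:
  assumes sys: "incidence_system K \<phi> SV SE"
  shows maxexc_ge: "\<And>U. FS.subspace U \<Longrightarrow> U \<subseteq> SV \<Longrightarrow> exc K \<phi> SE U \<le> maxexc K \<phi> SV SE"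
    and "\<exists>U. FS.subspace U \<and> U \<subseteq> SV \<and> maxexc K \<phi> SV SE = exc K \<phi> SE U"
proof -
  let ?X = "{exc K \<phi> SE U | U. FS.subspace U \<and> U \<subseteq> SV}"
  have SV: "FS.subspace SV" "FS.fin_dim SV" and SE: "FS.fin_dim SE"
    using sys by (auto simp: incidence_system_def)
  have "?X \<subseteq> {- int (FS.dim SV) .. int (FS.dim SE)}"
  proof
    fix z assume "z \<in> ?X"
    then obtain U where U: "z = exc K \<phi> SE U" "U \<subseteq> SV" by blast
    have "FS.dim U \<le> FS.dim SV" using FS.dim_le_fin_dim[OF SV(2) U(2)] .
    moreover have "FS.dim (Gamma K \<phi> SE U) \<le> FS.dim SE" using FS.dim_le_fin_dim[OF SE Gamma_subset] .
    ultimately show "z \<in> {- int (FS.dim SV) .. int (FS.dim SE)}" using U(1) by (simp add: exc_def)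
  qed
  then have fin: "finite ?X" using finite_subset by blast
  have "exc K \<phi> SE {0} \<in> ?X" using FS.subspace_0[OF SV(1)] FS.subspace_single_0 by blast
  then have "?X \<noteq> {}" by blast
  then show "\<exists>U. FS.subspace U \<and> U \<subseteq> SV \<and> maxexc K \<phi> SV SE = exc K \<phi> SE U"
    using Max_in[OF fin] unfolding maxexc_def by auto
  show "\<And>U. FS.subspace U \<Longrightarrow> U \<subseteq> SV \<Longrightarrow> exc K \<phi> SE U \<le> maxexc K \<phi> SV SE"
    unfolding maxexc_def using fin by (intro Max_ge) auto
qed

text \<open>Taking \<open>U = 0\<close> and \<open>U = SV\<close>: the maximum excess is at least \<open>0\<close> and at least \<open>-\<chi>\<close>.\<close>
lemma maxexc_nonneg:
  assumes sys: "incidence_system K \<phi> SV SE" shows "0 \<le> maxexc K \<phi> SV SE"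
proof -
  have "FS.subspace SV" using sys by (simp add: incidence_system_def)
  then have "exc K \<phi> SE {0} \<le> maxexc K \<phi> SV SE"
    using maxexc_ge[OF sys FS.subspace_single_0] FS.subspace_0 by blast
  then show ?thesis by (simp add: exc_def FS.dim_zero)
qed

lemma maxexc_ge_euler:
  assumes sys: "incidence_system K \<phi> SV SE"
  shows "int (FS.dim SE) - int (FS.dim SV) \<le> maxexc K \<phi> SV SE"
proof -
  have "FS.subspace SV" using sys by (simp add: incidence_system_def)
  then show ?thesis using maxexc_ge[OF sys, of SV] Gamma_whole[OF sys] by (simp add: exc_def)
qed

locale exact_triple =
  fixes K :: "'k set"
    and \<phi>1 \<phi>2 \<phi>3 :: "'k \<Rightarrow> ('y \<Rightarrow> nat \<Rightarrow> 'a::field) \<Rightarrow> ('x \<Rightarrow> nat \<Rightarrow> 'a)"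
    and SV1 SV2 SV3 :: "('x \<Rightarrow> nat \<Rightarrow> 'a) set" and SE1 SE2 SE3 :: "('y \<Rightarrow> nat \<Rightarrow> 'a) set"
    and AV BV :: "('x \<Rightarrow> nat \<Rightarrow> 'a) \<Rightarrow> ('x \<Rightarrow> nat \<Rightarrow> 'a)"
    and AE BE :: "('y \<Rightarrow> nat \<Rightarrow> 'a) \<Rightarrow> ('y \<Rightarrow> nat \<Rightarrow> 'a)"
  assumes sys1: "incidence_system K \<phi>1 SV1 SE1"
    and sys2: "incidence_system K \<phi>2 SV2 SE2"
    and sys3: "incidence_system K \<phi>3 SV3 SE3"
    and morA: "incidence_mor K \<phi>1 SV1 SE1 \<phi>2 SV2 SE2 AV AE"
    and morB: "incidence_mor K \<phi>2 SV2 SE2 \<phi>3 SV3 SE3 BV BE"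
    and exactV: "exact_on SV1 SV2 SV3 AV BV"
    and exactE: "exact_on SE1 SE2 SE3 AE BE"
begin

lemma spaces:
  "FS.subspace SV1" "FS.fin_dim SV1" "FS.subspace SE1" "FS.fin_dim SE1"
  "FS.subspace SV2" "FS.fin_dim SV2" "FS.subspace SE2" "FS.fin_dim SE2"
  "FS.subspace SV3" "FS.fin_dim SV3" "FS.subspace SE3" "FS.fin_dim SE3"
  using sys1 sys2 sys3 by (simp_all add: incidence_system_def)

lemma linear_maps: "flin AV" "flin AE" "flin BV" "flin BE"
  using morA morB by (simp_all add: incidence_mor_def)

lemma BV_AV: "x \<in> SV1 \<Longrightarrow> BV (AV x) = 0"
  using exactV by (auto simp: exact_on_def)

lemma AV_inj: "x \<in> SV1 \<Longrightarrow> y \<in> SV1 \<Longrightarrow> AV x = AV y \<Longrightarrow> x = y"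
  using FS.exact_on_inj[OF linear_maps(1) exactV spaces(1)] by blast

lemma Gamma_preimage:
  "{z\<in>SE1. AE z \<in> Gamma K \<phi>2 SE2 U} = Gamma K \<phi>1 SE1 {x\<in>SV1. AV x \<in> U}"
  using morA sys1 by (auto simp: Gamma_def incidence_mor_def incidence_system_def)

lemma Gamma_image: "BE ` Gamma K \<phi>2 SE2 U \<subseteq> Gamma K \<phi>3 SE3 (BV ` U)"
  using morB by (auto simp: Gamma_def incidence_mor_def)

lemma exc_decomposition:
  assumes U: "FS.subspace U" "U \<subseteq> SV2"
  shows "exc K \<phi>2 SE2 U = exc K \<phi>1 SE1 {x\<in>SV1. AV x \<in> U}
           + int (FS.dim (BE ` Gamma K \<phi>2 SE2 U)) - int (FS.dim (BV ` U))"
proof -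
  have "FS.dim U = FS.dim (BV ` U) + FS.dim {x\<in>SV1. AV x \<in> U}"
    using FS.exact_dim_preimage[OF linear_maps(1,3) exactV spaces(1,2) U(1)
        FS.fin_dim_subset[OF spaces(6) U(2)] U(2)] .
  moreover have "FS.dim (Gamma K \<phi>2 SE2 U)
      = FS.dim (BE ` Gamma K \<phi>2 SE2 U) + FS.dim {z\<in>SE1. AE z \<in> Gamma K \<phi>2 SE2 U}"
    using FS.exact_dim_preimage[OF linear_maps(2,4) exactE spaces(3,4) Gamma_subspace[OF sys2 U(1)]
        Gamma_fin_dim[OF sys2] Gamma_subset] .
  ultimately show ?thesis by (simp add: exc_def Gamma_preimage)
qed

lemma dims_additive:
  "FS.dim SV2 = FS.dim SV1 + FS.dim SV3" "FS.dim SE2 = FS.dim SE1 + FS.dim SE3"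
  using FS.exact_dim_additive[OF linear_maps(1,3) exactV spaces(1,2,5,6)]
    FS.exact_dim_additive[OF linear_maps(2,4) exactE spaces(3,4,7,8)] by simp_all

lemma exc_ge_of_lifting:
  assumes U: "FS.subspace U" "U \<subseteq> SV2"
    and lift: "Gamma K \<phi>3 SE3 (BV ` U) \<subseteq> BE ` Gamma K \<phi>2 SE2 U"
  shows "exc K \<phi>1 SE1 {x\<in>SV1. AV x \<in> U} + exc K \<phi>3 SE3 (BV ` U) \<le> exc K \<phi>2 SE2 U"
proof -
  have "BE ` Gamma K \<phi>2 SE2 U \<subseteq> SE3"
    using exactE Gamma_subset[of K \<phi>2 SE2 U] by (auto simp: exact_on_def)
  then have "FS.dim (Gamma K \<phi>3 SE3 (BV ` U)) \<le> FS.dim (BE ` Gamma K \<phi>2 SE2 U)"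
    using FS.dim_le_fin_dim[OF FS.fin_dim_subset[OF spaces(12)] lift] by simp
  then show ?thesis using exc_decomposition[OF U] by (simp add: exc_def)
qed

text \<open>A subobject has no larger maximum excess: push an optimal subspace forward along \<open>A\<close>.\<close>
lemma maxexc_mono: "maxexc K \<phi>1 SV1 SE1 \<le> maxexc K \<phi>2 SV2 SE2"
proof -
  obtain U1 where U1: "FS.subspace U1" "U1 \<subseteq> SV1" "maxexc K \<phi>1 SV1 SE1 = exc K \<phi>1 SE1 U1"
    using maxexc_attained(2)[OF sys1] by blast
  interpret A: Vector_Spaces.linear fscale fscale AV by (rule linear_maps(1))
  define U where "U = AV ` U1"
  have U: "FS.subspace U" "U \<subseteq> SV2"
    using A.subspace_image[OF U1(1)] U1(2) morA by (auto simp: U_def incidence_mor_def)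
  have "{x\<in>SV1. AV x \<in> U} = U1"
    using U1(2) AV_inj by (auto simp: U_def)
  moreover have "BV ` U = {0}"
  proof -
    have "BV ` U \<subseteq> {0}" using BV_AV U1(2) by (auto simp: U_def)
    moreover have "0 \<in> U" using imageI[OF FS.subspace_0[OF U1(1)], of AV] by (simp add: U_def)
    ultimately show ?thesis using flinD(3)[OF linear_maps(3)] by force
  qed
  ultimately have "exc K \<phi>1 SE1 U1 \<le> exc K \<phi>2 SE2 U"
    using exc_decomposition[OF U] by (simp add: FS.dim_zero)
  then show ?thesis using U1(3) maxexc_ge[OF sys2 U] by simp
qed

text \<open>Subadditivity in the middle: pull an optimal subspace back along \<open>A\<close> and push it along \<open>B\<close>.\<close>
lemma maxexc_subadditive:
  "maxexc K \<phi>2 SV2 SE2 \<le> maxexc K \<phi>1 SV1 SE1 + maxexc K \<phi>3 SV3 SE3"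
proof -
  obtain U where U: "FS.subspace U" "U \<subseteq> SV2" "maxexc K \<phi>2 SV2 SE2 = exc K \<phi>2 SE2 U"
    using maxexc_attained(2)[OF sys2] by blast
  interpret A: Vector_Spaces.linear fscale fscale AV by (rule linear_maps(1))
  interpret B: Vector_Spaces.linear fscale fscale BV by (rule linear_maps(3))
  define U1 where "U1 = {x\<in>SV1. AV x \<in> U}"
  have U1: "FS.subspace U1" "U1 \<subseteq> SV1"
    using FS.subspace_inter[OF spaces(1) A.subspace_vimage[OF U(1)]] by (auto simp: U1_def Int_def)
  have U3: "FS.subspace (BV ` U)" "BV ` U \<subseteq> SV3"
    using B.subspace_image[OF U(1)] U(2) morB by (auto simp: incidence_mor_def)
  have "FS.dim (BE ` Gamma K \<phi>2 SE2 U) \<le> FS.dim (Gamma K \<phi>3 SE3 (BV ` U))"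
    using FS.dim_le_fin_dim[OF Gamma_fin_dim[OF sys3] Gamma_image] .
  then have "exc K \<phi>2 SE2 U \<le> exc K \<phi>1 SE1 U1 + exc K \<phi>3 SE3 (BV ` U)"
    using exc_decomposition[OF U(1,2)] by (simp add: exc_def U1_def)
  then show ?thesis using U(3) maxexc_ge[OF sys1 U1] maxexc_ge[OF sys3 U3] by simp
qed

text \<open>The quotient bound: pull an optimal subspace of \<open>F\<^sub>3(V)\<close> back along \<open>B\<close>; its
  \<open>A\<close>-preimage is all of \<open>F\<^sub>1(V)\<close>, which contributes \<open>dim F\<^sub>1(E) - dim F\<^sub>1(V)\<close>.\<close>
lemma maxexc_quotient:
  "maxexc K \<phi>3 SV3 SE3 \<le> maxexc K \<phi>2 SV2 SE2 + int (FS.dim SV1) - int (FS.dim SE1)"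
proof -
  obtain U3 where U3: "FS.subspace U3" "U3 \<subseteq> SV3" "maxexc K \<phi>3 SV3 SE3 = exc K \<phi>3 SE3 U3"
    using maxexc_attained(2)[OF sys3] by blast
  interpret B: Vector_Spaces.linear fscale fscale BV by (rule linear_maps(3))
  define U where "U = {y\<in>SV2. BV y \<in> U3}"
  have U: "FS.subspace U" "U \<subseteq> SV2"
    using FS.subspace_inter[OF spaces(5) B.subspace_vimage[OF U3(1)]] by (auto simp: U_def Int_def)
  have BU: "BV ` U = U3"
    using U3(2) exactV by (auto simp: U_def exact_on_def)
  have AU: "{x\<in>SV1. AV x \<in> U} = SV1"
    using BV_AV FS.subspace_0[OF U3(1)] morA by (auto simp: U_def incidence_mor_def)
  have "Gamma K \<phi>3 SE3 U3 \<subseteq> BE ` Gamma K \<phi>2 SE2 U"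
  proof
    fix w assume w: "w \<in> Gamma K \<phi>3 SE3 U3"
    then obtain x where x: "x \<in> SE2" "w = BE x" using exactE by (auto simp: Gamma_def exact_on_def)
    then have "x \<in> Gamma K \<phi>2 SE2 U"
      using w sys2 morB by (auto simp: Gamma_def U_def incidence_system_def incidence_mor_def)
    then show "w \<in> BE ` Gamma K \<phi>2 SE2 U" using x(2) by blast
  qed
  then have "exc K \<phi>1 SE1 SV1 + exc K \<phi>3 SE3 U3 \<le> exc K \<phi>2 SE2 U"
    by (rule exc_ge_of_lifting[OF U, unfolded BU AU])
  then show ?thesis
    using U3(3) maxexc_ge[OF sys2 U] Gamma_whole[OF sys1] by (simp add: exc_def)
qed

end

locale split_exact_triple = exact_triple +
  fixes sV :: "('x \<Rightarrow> nat \<Rightarrow> 'a::field) \<Rightarrow> ('x \<Rightarrow> nat \<Rightarrow> 'a)"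
    and sE :: "('y \<Rightarrow> nat \<Rightarrow> 'a) \<Rightarrow> ('y \<Rightarrow> nat \<Rightarrow> 'a)"
  assumes morS: "incidence_mor K \<phi>3 SV3 SE3 \<phi>2 SV2 SE2 sV sE"
    and sectionV: "\<And>y. y \<in> SV3 \<Longrightarrow> BV (sV y) = y"
    and sectionE: "\<And>y. y \<in> SE3 \<Longrightarrow> BE (sE y) = y"
begin

definition glue :: "('x \<Rightarrow> nat \<Rightarrow> 'a) set \<Rightarrow> ('x \<Rightarrow> nat \<Rightarrow> 'a) set \<Rightarrow> ('x \<Rightarrow> nat \<Rightarrow> 'a) set" where
  "glue U1 U3 = {a + b |a b. a \<in> AV ` U1 \<and> b \<in> sV ` U3}"

lemma glue_mem: "x \<in> U1 \<Longrightarrow> y \<in> U3 \<Longrightarrow> AV x + sV y \<in> glue U1 U3"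
  unfolding glue_def by blast

lemma glue_props:
  assumes U1: "FS.subspace U1" "U1 \<subseteq> SV1" and U3: "FS.subspace U3" "U3 \<subseteq> SV3"
  shows "FS.subspace (glue U1 U3)" "glue U1 U3 \<subseteq> SV2"
    and "BV ` glue U1 U3 = U3" "{x\<in>SV1. AV x \<in> glue U1 U3} = U1"
proof -
  interpret A: Vector_Spaces.linear fscale fscale AV by (rule linear_maps(1))
  interpret B: Vector_Spaces.linear fscale fscale BV by (rule linear_maps(3))
  interpret S: Vector_Spaces.linear fscale fscale sV using morS by (simp add: incidence_mor_def)
  have "AV ` SV1 \<subseteq> SV2" "sV ` SV3 \<subseteq> SV2"
    using morA morS by (simp_all add: incidence_mor_def)
  then have "AV ` U1 \<subseteq> SV2" "sV ` U3 \<subseteq> SV2"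
    using image_mono[OF U1(2), of AV] image_mono[OF U3(2), of sV] by (simp_all add: subset_trans)
  then show "FS.subspace (glue U1 U3)" "glue U1 U3 \<subseteq> SV2"
    unfolding glue_def using FS.subspace_add[OF spaces(5)]
    by (auto intro: FS.subspace_sums[OF A.subspace_image[OF U1(1)] S.subspace_image[OF U3(1)]])
  have BV_glue: "BV (AV x + sV y) = y" if "x \<in> U1" "y \<in> U3" for x y
  proof -
    have "x \<in> SV1" "y \<in> SV3" using that U1(2) U3(2) by auto
    then show ?thesis using BV_AV sectionV B.add by simp
  qed
  have z1: "0 \<in> U1" and z3: "0 \<in> U3" using FS.subspace_0[OF U1(1)] FS.subspace_0[OF U3(1)] .
  show "BV ` glue U1 U3 = U3"
  proof
    show "BV ` glue U1 U3 \<subseteq> U3" using BV_glue by (auto simp: glue_def)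
    show "U3 \<subseteq> BV ` glue U1 U3" using BV_glue[OF z1] glue_mem[OF z1] by (metis image_eqI subsetI)
  qed
  show "{x\<in>SV1. AV x \<in> glue U1 U3} = U1"
  proof
    show "U1 \<subseteq> {x\<in>SV1. AV x \<in> glue U1 U3}" using U1(2) glue_mem[OF _ z3] by auto
    show "{x\<in>SV1. AV x \<in> glue U1 U3} \<subseteq> U1"
    proof clarify
      fix x' assume x': "x' \<in> SV1" "AV x' \<in> glue U1 U3"
      then obtain x y where xy: "x \<in> U1" "y \<in> U3" "AV x' = AV x + sV y" unfolding glue_def by blast
      then have "y = 0" using BV_glue[OF xy(1,2)] BV_AV[OF x'(1)] by simp
      then have "x' = x" using AV_inj[OF x'(1)] xy U1(2) by auto
      then show "x' \<in> U1" using xy(1) by simp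
    qed
  qed
qed

lemma glue_lift:
  assumes "0 \<in> U1"
  shows "Gamma K \<phi>3 SE3 U3 \<subseteq> BE ` Gamma K \<phi>2 SE2 (glue U1 U3)"
proof
  fix w assume "w \<in> Gamma K \<phi>3 SE3 U3"
  then have w: "w \<in> SE3" "\<And>k. k \<in> K \<Longrightarrow> \<phi>3 k w \<in> U3" by (simp_all add: Gamma_def)
  have "\<phi>2 k (sE w) \<in> glue U1 U3" if "k \<in> K" for k
    using glue_mem[OF assms w(2)[OF that]] w(1) that morS flinD(3)[OF linear_maps(1)]
    by (simp add: incidence_mor_def)
  moreover have "sE w \<in> SE2" using w(1) morS by (auto simp: incidence_mor_def)
  ultimately have "sE w \<in> Gamma K \<phi>2 SE2 (glue U1 U3)" by (simp add: Gamma_def)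
  then show "w \<in> BE ` Gamma K \<phi>2 SE2 (glue U1 U3)" using sectionE[OF w(1)] by (metis image_eqI)
qed

text \<open>For a split sequence subadditivity reverses: gluing two optimal subspaces realises the
  sum of their excesses.\<close>
lemma maxexc_superadditive:
  "maxexc K \<phi>1 SV1 SE1 + maxexc K \<phi>3 SV3 SE3 \<le> maxexc K \<phi>2 SV2 SE2"
proof -
  obtain U1 where U1: "FS.subspace U1" "U1 \<subseteq> SV1" "maxexc K \<phi>1 SV1 SE1 = exc K \<phi>1 SE1 U1"
    using maxexc_attained(2)[OF sys1] by blast
  obtain U3 where U3: "FS.subspace U3" "U3 \<subseteq> SV3" "maxexc K \<phi>3 SV3 SE3 = exc K \<phi>3 SE3 U3"
    using maxexc_attained(2)[OF sys3] by blast
  note glued = glue_props[OF U1(1,2) U3(1,2)]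
  have "exc K \<phi>1 SE1 U1 + exc K \<phi>3 SE3 U3 \<le> exc K \<phi>2 SE2 (glue U1 U3)"
    by (rule exc_ge_of_lifting[OF glued(1,2), unfolded glued(3,4), OF glue_lift[OF FS.subspace_0[OF U1(1)]]])
  then show ?thesis using U1(3) U3(3) maxexc_ge[OF sys2 glued(1,2)] by simp
qed

end

section \<open>Sheaves as incidence systems\<close>

lemma sum_fun_apply: "(\<Sum>p\<in>A. f p) b = (\<Sum>p\<in>A. f p b)"
  by (induct A rule: infinite_finite_induct) auto

lemma lin_in: "lin m n M x \<in> cspace m"
  by (simp add: lin_def cspace_def)

lemma lin_add: "lin m n M (x + y) = lin m n M x + lin m n M y"
  by (simp add: lin_def fun_eq_iff sum.distrib distrib_left)

lemma lin_scale: "lin m n (M :: nat \<Rightarrow> nat \<Rightarrow> 'a::field) (\<lambda>i. c * x i) = (\<lambda>i. c * lin m n M x i)"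
  by (simp add: lin_def fun_eq_iff sum_distrib_left algebra_simps)

lemma lin_zero: "lin m n M 0 = 0"
  by (simp add: lin_def fun_eq_iff)

definition secG :: "'b set \<Rightarrow> ('b \<Rightarrow> nat) \<Rightarrow> ('b \<Rightarrow> nat \<Rightarrow> 'a::field) set" where
  "secG I n = {x. (\<forall>b\<in>I. x b \<in> cspace (n b)) \<and> (\<forall>b. b \<notin> I \<longrightarrow> x b = 0)}"

lemma secV_eq: "secV G F = secG (verts G) (sv F)"
  by (auto simp: secV_def secG_def)

lemma secE_eq: "secE G F = secG (arcs G) (se F)"
  by (auto simp: secE_def secG_def)

lemma secG_subspace: "FS.subspace (secG I n)"
  unfolding FS.subspace_def secG_def cspace_def by (auto simp: fscale_def)

definition unit_vec :: "'b \<Rightarrow> nat \<Rightarrow> ('b \<Rightarrow> nat \<Rightarrow> 'a::field)" where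
  "unit_vec b i = (\<lambda>b' j. if b' = b \<and> j = i then 1 else 0)"

lemma unit_vec_inj: "unit_vec b i = (unit_vec b' i' :: 'b \<Rightarrow> nat \<Rightarrow> 'a::field) \<Longrightarrow> (b, i) = (b', i')"
  by (auto simp: unit_vec_def fun_eq_iff split: if_splits)

lemma sum_unit_vec:
  assumes "finite P"
  shows "(\<Sum>p\<in>P. fscale (c p) (unit_vec (fst p) (snd p))) b j = (if (b, j) \<in> P then c (b, j) else 0)"
proof -
  have "(\<Sum>p\<in>P. fscale (c p) (unit_vec (fst p) (snd p))) b j = (\<Sum>p\<in>P. if p = (b, j) then c p else 0)"
    by (simp add: sum_fun_apply fscale_def unit_vec_def) (intro sum.cong, auto)
  then show ?thesis using assms by (simp add: sum.delta')
qed

text \<open>The unit vectors indexed by \<open>(b, i)\<close>, \<open>b \<in> I\<close>, \<open>i < n b\<close> form a basis of the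
  sections, so these have dimension \<open>\<Sum>b\<in>I. n b\<close>.\<close>
lemma secG_dim:
  assumes "finite I"
  shows "FS.fin_dim (secG I n :: ('b \<Rightarrow> nat \<Rightarrow> 'a::field) set)"
    and "FS.dim (secG I n :: ('b \<Rightarrow> nat \<Rightarrow> 'a::field) set) = (\<Sum>b\<in>I. n b)"
proof -
  define P where "P = (SIGMA b:I. {..<n b})"
  define B :: "('b \<Rightarrow> nat \<Rightarrow> 'a) set" where "B = (\<lambda>p. unit_vec (fst p) (snd p)) ` P"
  have finP: "finite P" using assms by (simp add: P_def)
  have inj: "inj_on (\<lambda>p. unit_vec (fst p) (snd p) :: 'b \<Rightarrow> nat \<Rightarrow> 'a) P"
    by (rule inj_onI) (metis prod.collapse unit_vec_inj)
  have cardB: "card B = (\<Sum>b\<in>I. n b)"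
    using card_image[OF inj] card_SigmaI[OF assms, of "\<lambda>b. {..<n b}"] by (simp add: B_def P_def)
  have BS: "B \<subseteq> secG I n"
    by (auto simp: B_def P_def secG_def cspace_def unit_vec_def)
  have span: "secG I n \<subseteq> FS.span B"
  proof
    fix x :: "'b \<Rightarrow> nat \<Rightarrow> 'a" assume x: "x \<in> secG I n"
    have "(\<Sum>p\<in>P. fscale (x (fst p) (snd p)) (unit_vec (fst p) (snd p))) b j = x b j" for b j
      unfolding sum_unit_vec[OF finP] using x
      by (cases "b \<in> I"; cases "j < n b") (auto simp: P_def secG_def cspace_def)
    then have "x = (\<Sum>p\<in>P. fscale (x (fst p) (snd p)) (unit_vec (fst p) (snd p)))"
      by (simp add: fun_eq_iff)
    also have "\<dots> \<in> FS.span B"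
      by (intro FS.span_sum FS.span_scale FS.span_base) (auto simp: B_def)
    finally show "x \<in> FS.span B" .
  qed
  have ind: "FS.independent B"
  proof (rule FS.independent_if_scalars_zero)
    show "finite B" using finP by (simp add: B_def)
    fix c and y :: "'b \<Rightarrow> nat \<Rightarrow> 'a"
    assume zero: "(\<Sum>x\<in>B. fscale (c x) x) = 0" and y: "y \<in> B"
    then obtain p where p: "p \<in> P" "y = unit_vec (fst p) (snd p)" by (auto simp: B_def)
    have "(\<Sum>q\<in>P. fscale (c (unit_vec (fst q) (snd q))) (unit_vec (fst q) (snd q))) = 0"
      using zero by (simp add: B_def sum.reindex[OF inj])
    then have "(\<Sum>q\<in>P. fscale (c (unit_vec (fst q) (snd q))) (unit_vec (fst q) (snd q))) (fst p) (snd p) = 0"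
      by simp
    then show "c y = 0" using p by (simp add: sum_unit_vec[OF finP])
  qed
  show "FS.fin_dim (secG I n :: ('b \<Rightarrow> nat \<Rightarrow> 'a::field) set)"
    using span finP unfolding FS.fin_dim_def B_def by blast
  show "FS.dim (secG I n :: ('b \<Rightarrow> nat \<Rightarrow> 'a::field) set) = (\<Sum>b\<in>I. n b)"
    using FS.basis_card_eq_dim[OF BS span ind] cardB by simp
qed

definition lift :: "'b set \<Rightarrow> ('b \<Rightarrow> (nat \<Rightarrow> 'a::field) \<Rightarrow> (nat \<Rightarrow> 'a)) \<Rightarrow> ('b \<Rightarrow> nat \<Rightarrow> 'a) \<Rightarrow> ('b \<Rightarrow> nat \<Rightarrow> 'a)" where
  "lift I f x = (\<lambda>b. if b \<in> I then f b (x b) else 0)"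

lemma lift_maps:
  assumes "\<And>b w. b \<in> I \<Longrightarrow> w \<in> cspace (n1 b) \<Longrightarrow> f b w \<in> cspace (n2 b)"
  shows "lift I f ` secG I n1 \<subseteq> secG I n2"
  using assms by (auto simp: lift_def secG_def)

lemma lift_image:
  "lift I f ` secG I n = {y. (\<forall>b\<in>I. y b \<in> f b ` cspace (n b)) \<and> (\<forall>b. b \<notin> I \<longrightarrow> y b = 0)}"
proof
  show "lift I f ` secG I n \<subseteq> {y. (\<forall>b\<in>I. y b \<in> f b ` cspace (n b)) \<and> (\<forall>b. b \<notin> I \<longrightarrow> y b = 0)}"
    by (auto simp: lift_def secG_def)
next
  show "{y. (\<forall>b\<in>I. y b \<in> f b ` cspace (n b)) \<and> (\<forall>b. b \<notin> I \<longrightarrow> y b = 0)} \<subseteq> lift I f ` secG I n"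
  proof clarify
    fix y assume y: "\<forall>b\<in>I. y b \<in> f b ` cspace (n b)" "\<forall>b. b \<notin> I \<longrightarrow> y b = 0"
    obtain x where x: "\<forall>b\<in>I. x b \<in> cspace (n b) \<and> y b = f b (x b)"
      using bchoice[OF y(1)[unfolded image_iff Bex_def]] by blast
    define x' where "x' b = (if b \<in> I then x b else 0)" for b
    have "x' \<in> secG I n" "lift I f x' = y"
      using x y(2) by (auto simp: x'_def secG_def lift_def fun_eq_iff)
    then show "y \<in> lift I f ` secG I n" by (metis image_eqI)
  qed
qed

lemma lift_exact:
  assumes ex: "\<And>b. b \<in> I \<Longrightarrow> short_exact_lin (n1 b) (n2 b) (n3 b) (f b) (g b)"
    and zero: "\<And>b. f b 0 = 0"
  shows "exact_on (secG I n1) (secG I n2) (secG I n3) (lift I f) (lift I g)"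
proof -
  have inj: "\<And>b. b \<in> I \<Longrightarrow> inj_on (f b) (cspace (n1 b))"
   and ker: "\<And>b. b \<in> I \<Longrightarrow> f b ` cspace (n1 b) = {y \<in> cspace (n2 b). g b y = 0}"
   and surj: "\<And>b. b \<in> I \<Longrightarrow> g b ` cspace (n2 b) = cspace (n3 b)"
    using ex by (auto simp: short_exact_lin_def)
  have "x = 0" if x: "x \<in> secG I n1" "lift I f x = 0" for x
  proof -
    have "x b = 0" for b
    proof (cases "b \<in> I")
      case True
      have "lift I f x b = 0" using x(2) by simp
      then have "f b (x b) = f b 0" using True zero by (simp add: lift_def)
      moreover have "x b \<in> cspace (n1 b)" "0 \<in> cspace (n1 b)"
        using x(1) True by (auto simp: secG_def cspace_def)
      ultimately show ?thesis using inj_onD[OF inj[OF True]] by blast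
    qed (use x(1) in \<open>auto simp: secG_def\<close>)
    then show ?thesis by (simp add: fun_eq_iff)
  qed
  moreover have "lift I f ` secG I n1 = {y \<in> secG I n2. lift I g y = 0}"
    unfolding lift_image using ker by (auto simp: secG_def lift_def fun_eq_iff)
  moreover have "lift I g ` secG I n2 = secG I n3"
    unfolding lift_image using surj by (auto simp: secG_def)
  ultimately show ?thesis by (auto simp: exact_on_def)
qed

definition coord_linear :: "('b \<Rightarrow> (nat \<Rightarrow> 'a::field) \<Rightarrow> (nat \<Rightarrow> 'a)) \<Rightarrow> bool" where
  "coord_linear f \<longleftrightarrow> (\<forall>b x y. f b (x + y) = f b x + f b y) \<and> (\<forall>b c x. f b (\<lambda>i. c * x i) = (\<lambda>i. c * f b x i))"

lemma coord_linear_zero: "coord_linear f \<Longrightarrow> f b 0 = 0"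
  unfolding coord_linear_def by (metis (no_types) add_cancel_right_right add_0)

lemma coord_linear_lin: "coord_linear (\<lambda>b. lin (m b) (n b) (M b))"
  by (simp add: coord_linear_def lin_add lin_scale)

lemma flin_lift: "coord_linear f \<Longrightarrow> flin (lift I f)"
  by (rule flinI) (simp_all add: coord_linear_def lift_def fun_eq_iff fscale_def)

lemma fin_digraph_facts:
  assumes "fin_digraph G"
  shows "finite (verts G)" "finite (arcs G)"
    "\<And>e. e \<in> arcs G \<Longrightarrow> head G e \<in> verts G" "\<And>e. e \<in> arcs G \<Longrightarrow> tail G e \<in> verts G"
proof -
  interpret fin_digraph G by fact
  show "finite (verts G)" "finite (arcs G)"
    "\<And>e. e \<in> arcs G \<Longrightarrow> head G e \<in> verts G" "\<And>e. e \<in> arcs G \<Longrightarrow> tail G e \<in> verts G" by auto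
qed

text \<open>The boundary components of a sheaf: for an arc \<open>e\<close> and \<open>b = True\<close> (resp. \<open>False\<close>),
  \<open>phi G F (e, b)\<close> maps a section of \<open>F(E)\<close> to the image of its \<open>e\<close>-component under
  \<open>d\<^sub>h\<close> (resp. \<open>d\<^sub>t\<close>).  With these, \<open>\<Gamma>\<^sub>h\<^sub>t(U)\<close> is the \<open>Gamma\<close> of an incidence system.\<close>
definition phi :: "('v,'e) pre_digraph \<Rightarrow> ('v,'e,'a::field) sheaf \<Rightarrow> 'e \<times> bool
    \<Rightarrow> ('e \<Rightarrow> nat \<Rightarrow> 'a) \<Rightarrow> ('v \<Rightarrow> nat \<Rightarrow> 'a)" where
  "phi G F k x = (if snd k then d_h G F (emb (fst k) (x (fst k))) else d_t G F (emb (fst k) (x (fst k))))"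

lemma sum_emb:
  assumes "finite A" "\<And>e'. r e' 0 = 0"
  shows "(\<Sum>e'\<in>{e'\<in>A. g e' = v}. r e' (emb e w e')) = (if e \<in> A \<and> g e = v then r e w else 0)"
proof -
  have "(\<Sum>e'\<in>{e'\<in>A. g e' = v}. r e' (emb e w e')) = (\<Sum>e'\<in>{e'\<in>A. g e' = v}. if e' = e then r e w else 0)"
    using assms(2) by (intro sum.cong) (auto simp: emb_def)
  then show ?thesis using assms(1) by (simp add: sum.delta)
qed

lemma phi_res:
  assumes G: "fin_digraph G" and e: "e \<in> arcs G"
  shows "phi G F (e, True) x = (\<lambda>v. if v = head G e then resH G F e (x e) else 0)"
    and "phi G F (e, False) x = (\<lambda>v. if v = tail G e then resT G F e (x e) else 0)"
  using fin_digraph_facts[OF G] e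
    sum_emb[where A="arcs G" and r="resH G F" and g="head G" and e=e and w="x e"]
    sum_emb[where A="arcs G" and r="resT G F" and g="tail G" and e=e and w="x e"]
  by (auto simp: phi_def d_h_def d_t_def resH_def resT_def lin_zero fun_eq_iff)

lemma gamma_ht_eq: "gamma_ht G F U = Gamma (arcs G \<times> UNIV) (phi G F) (secE G F) U"
  unfolding gamma_ht_def Gamma_def by (auto simp: phi_def)

lemma max_excess_eq: "max_excess G F = maxexc (arcs G \<times> UNIV) (phi G F) (secV G F) (secE G F)"
  unfolding max_excess_def maxexc_def excess_def exc_def gamma_ht_eq ..

lemma euler_char_eq:
  assumes G: "fin_digraph G"
  shows "euler_char G F = int (FS.dim (secV G F)) - int (FS.dim (secE G F))"
  unfolding euler_char_def secV_eq secE_eq secG_dim(2)[OF fin_digraph_facts(1)[OF G]]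
    secG_dim(2)[OF fin_digraph_facts(2)[OF G]] ..

lemma sheaf_incidence_system:
  assumes G: "fin_digraph G"
  shows "incidence_system (arcs G \<times> UNIV) (phi G F) (secV G F) (secE G F)"
  unfolding incidence_system_def
proof (intro conjI ballI)
  show "FS.subspace (secV G F)" "FS.subspace (secE G F)"
    unfolding secV_eq secE_eq by (rule secG_subspace)+
  show "FS.fin_dim (secV G F)" "FS.fin_dim (secE G F)"
    unfolding secV_eq secE_eq using secG_dim(1) fin_digraph_facts(1,2)[OF G] by blast+
next
  fix k assume "k \<in> arcs G \<times> (UNIV :: bool set)"
  then obtain e b where k: "k = (e, b)" "e \<in> arcs G" by auto
  show "flin (phi G F k)"
    by (rule flinI) (cases b; simp add: k phi_res[OF G k(2)] resH_def resT_def lin_add lin_scale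
        fscale_def fun_eq_iff)+
  show "phi G F k x \<in> secV G F" for x
    using fin_digraph_facts(3,4)[OF G k(2)]
    by (cases b) (auto simp: k phi_res[OF G k(2)] secV_def resH_def resT_def lin_def cspace_def)
qed

lemma sheaf_lift_mor:
  assumes G: "fin_digraph G" and lin: "coord_linear fV" "coord_linear fE"
    and mapsV: "\<And>v w. v \<in> verts G \<Longrightarrow> w \<in> cspace (sv F v) \<Longrightarrow> fV v w \<in> cspace (sv H v)"
    and mapsE: "\<And>e w. e \<in> arcs G \<Longrightarrow> w \<in> cspace (se F e) \<Longrightarrow> fE e w \<in> cspace (se H e)"
    and commH: "\<And>e w. e \<in> arcs G \<Longrightarrow> w \<in> cspace (se F e) \<Longrightarrow>
                   resH G H e (fE e w) = fV (head G e) (resH G F e w)"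
    and commT: "\<And>e w. e \<in> arcs G \<Longrightarrow> w \<in> cspace (se F e) \<Longrightarrow>
                   resT G H e (fE e w) = fV (tail G e) (resT G F e w)"
  shows "incidence_mor (arcs G \<times> UNIV) (phi G F) (secV G F) (secE G F) (phi G H) (secV G H) (secE G H)
           (lift (verts G) fV) (lift (arcs G) fE)"
  unfolding incidence_mor_def
proof (intro conjI ballI)
  show "flin (lift (verts G) fV)" "flin (lift (arcs G) fE)" using lin by (simp_all add: flin_lift)
  show "lift (verts G) fV ` secV G F \<subseteq> secV G H" "lift (arcs G) fE ` secE G F \<subseteq> secE G H"
    unfolding secV_eq secE_eq using mapsV mapsE by (simp_all add: lift_maps)
next
  fix k x assume "k \<in> arcs G \<times> (UNIV :: bool set)" and x: "x \<in> secE G F"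
  then obtain e b where k: "k = (e, b)" "e \<in> arcs G" by auto
  have xe: "x e \<in> cspace (se F e)" using x k(2) by (simp add: secE_def)
  show "phi G H k (lift (arcs G) fE x) = lift (verts G) fV (phi G F k x)"
    using fin_digraph_facts(3,4)[OF G k(2)] commH[OF k(2) xe] commT[OF k(2) xe]
      coord_linear_zero[OF lin(1)]
    by (cases b) (auto simp: k phi_res[OF G k(2)] lift_def fun_eq_iff)
qed

lemma morV_eq: "morV F H a = (\<lambda>v. lin (sv H v) (sv F v) (mor_v a v))"
  by (simp add: fun_eq_iff morV_def)

lemma morE_eq: "morE F H a = (\<lambda>e. lin (se H e) (se F e) (mor_e a e))"
  by (simp add: fun_eq_iff morE_def)

lemma sheaf_mor_incidence_mor:
  assumes G: "fin_digraph G" and m: "is_sheaf_mor G F H a"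
  shows "incidence_mor (arcs G \<times> UNIV) (phi G F) (secV G F) (secE G F) (phi G H) (secV G H) (secE G H)
           (lift (verts G) (morV F H a)) (lift (arcs G) (morE F H a))"
  using m unfolding is_sheaf_mor_def
  by (intro sheaf_lift_mor[OF G]) (simp_all add: morV_eq morE_eq coord_linear_lin lin_in)

lemma sheaf_exact_triple:
  assumes G: "fin_digraph G" and ex: "short_exact G F1 F2 F3 a b"
  shows "exact_triple (arcs G \<times> UNIV) (phi G F1) (phi G F2) (phi G F3)
           (secV G F1) (secV G F2) (secV G F3) (secE G F1) (secE G F2) (secE G F3)
           (lift (verts G) (morV F1 F2 a)) (lift (verts G) (morV F2 F3 b))
           (lift (arcs G) (morE F1 F2 a)) (lift (arcs G) (morE F2 F3 b))"
  using ex unfolding exact_triple_def short_exact_def secV_eq secE_eq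
  by (simp add: sheaf_incidence_system[OF G, unfolded secV_eq secE_eq]
      sheaf_mor_incidence_mor[OF G, unfolded secV_eq secE_eq] lift_exact morV_def morE_def lin_zero)

text \<open>Coordinates of a direct sum: the second summand occupies the coordinates after the first
  block; \<open>drop_coords\<close> reads it off and \<open>shift_coords\<close> puts it in place.\<close>
definition drop_coords :: "nat \<Rightarrow> (nat \<Rightarrow> 'a) \<Rightarrow> (nat \<Rightarrow> 'a)" where
  "drop_coords n w = (\<lambda>i. w (i + n))"

definition shift_coords :: "nat \<Rightarrow> (nat \<Rightarrow> 'a::zero) \<Rightarrow> (nat \<Rightarrow> 'a)" where
  "shift_coords n w = (\<lambda>i. if n \<le> i then w (i - n) else 0)"

lemma drop_shift_coords: "drop_coords n (shift_coords n w) = w"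
  by (simp add: drop_coords_def shift_coords_def)

lemma coords_split_exact:
  "short_exact_lin n1 (n1 + n2) n2 (\<lambda>w. w) (drop_coords n1 :: (nat \<Rightarrow> 'a::field) \<Rightarrow> _)"
  unfolding short_exact_lin_def
proof (intro conjI)
  show "(\<lambda>w. w) ` cspace n1 = {y \<in> cspace (n1 + n2). drop_coords n1 y = (0 :: nat \<Rightarrow> 'a)}"
    by (auto simp: cspace_def drop_coords_def fun_eq_iff) (metis le_add_diff_inverse2)
  have "drop_coords n1 ` cspace (n1 + n2) \<subseteq> (cspace n2 :: (nat \<Rightarrow> 'a) set)"
    by (auto simp: cspace_def drop_coords_def)
  moreover have "w \<in> drop_coords n1 ` cspace (n1 + n2)" if "w \<in> cspace n2" for w :: "nat \<Rightarrow> 'a"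
  proof -
    have "shift_coords n1 w \<in> cspace (n1 + n2)" using that by (auto simp: cspace_def shift_coords_def)
    then show ?thesis by (metis image_eqI drop_shift_coords)
  qed
  ultimately show "drop_coords n1 ` cspace (n1 + n2) = (cspace n2 :: (nat \<Rightarrow> 'a) set)" by blast
qed simp

lemma coord_linear_drop: "coord_linear (\<lambda>b. drop_coords (n b) :: (nat \<Rightarrow> 'a::field) \<Rightarrow> _)"
  by (simp add: coord_linear_def drop_coords_def fun_eq_iff)

lemma coord_linear_shift: "coord_linear (\<lambda>b. shift_coords (n b) :: (nat \<Rightarrow> 'a::field) \<Rightarrow> _)"
  by (simp add: coord_linear_def shift_coords_def fun_eq_iff)

lemma coord_linear_id: "coord_linear (\<lambda>b w. w :: nat \<Rightarrow> 'a::field)"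
  by (simp add: coord_linear_def)

lemma sum_lessThan_add: "(\<Sum>j<a + b. g j) = (\<Sum>j<a. g j) + (\<Sum>j<(b::nat). g (j + a))"
  by (induct b) (simp_all add: ac_simps)

lemma lin_blockdiag_first:
  assumes "w \<in> cspace k1"
  shows "lin (m1 + m2) (k1 + k2) (blockdiag m1 k1 A B) w = lin m1 k1 (A :: nat \<Rightarrow> nat \<Rightarrow> 'a::field) w"
proof
  fix i
  have "(\<Sum>j<k1 + k2. blockdiag m1 k1 A B i j * w j) = (\<Sum>j<k1. blockdiag m1 k1 A B i j * w j)"
    using assms by (simp add: sum_lessThan_add cspace_def)
  also have "\<dots> = (if i < m1 then (\<Sum>j<k1. A i j * w j) else 0)"
    by (auto simp: blockdiag_def intro: sum.neutral)
  finally show "lin (m1 + m2) (k1 + k2) (blockdiag m1 k1 A B) w i = lin m1 k1 A w i"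
    by (simp add: lin_def)
qed

lemma lin_blockdiag_drop:
  "drop_coords m1 (lin (m1 + m2) (k1 + k2) (blockdiag m1 k1 A B) w)
     = lin m2 k2 (B :: nat \<Rightarrow> nat \<Rightarrow> 'a::field) (drop_coords k1 w)"
  by (simp add: fun_eq_iff drop_coords_def lin_def sum_lessThan_add blockdiag_def)

lemma lin_blockdiag_shift:
  "lin (m1 + m2) (k1 + k2) (blockdiag m1 k1 A B) (shift_coords k1 y)
     = shift_coords m1 (lin m2 k2 (B :: nat \<Rightarrow> nat \<Rightarrow> 'a::field) y)"
proof
  fix i
  have "(\<Sum>j<k1 + k2. blockdiag m1 k1 A B i j * shift_coords k1 y j)
      = (if m1 \<le> i then (\<Sum>j<k2. B (i - m1) j * y j) else 0)"
    by (auto simp: sum_lessThan_add shift_coords_def blockdiag_def)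
  then show "lin (m1 + m2) (k1 + k2) (blockdiag m1 k1 A B) (shift_coords k1 y) i
      = shift_coords m1 (lin m2 k2 B y) i"
    by (auto simp: lin_def shift_coords_def)
qed

lemma sheaf_sum_split_exact:
  fixes F1 F2 :: "('v,'e,'a::field) sheaf"
  assumes G: "fin_digraph G"
  defines "S \<equiv> sheaf_sum G F1 F2"
  shows "split_exact_triple (arcs G \<times> UNIV) (phi G F1) (phi G S) (phi G F2)
           (secV G F1) (secV G S) (secV G F2) (secE G F1) (secE G S) (secE G F2)
           (lift (verts G) (\<lambda>v w. w)) (lift (verts G) (\<lambda>v. drop_coords (sv F1 v)))
           (lift (arcs G) (\<lambda>e w. w)) (lift (arcs G) (\<lambda>e. drop_coords (se F1 e)))
           (lift (verts G) (\<lambda>v. shift_coords (sv F1 v))) (lift (arcs G) (\<lambda>e. shift_coords (se F1 e)))"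
proof -
  have sel: "sv S = (\<lambda>v. sv F1 v + sv F2 v)" "se S = (\<lambda>e. se F1 e + se F2 e)"
    "sh S e = blockdiag (sv F1 (head G e)) (se F1 e) (sh F1 e) (sh F2 e)"
    "st S e = blockdiag (sv F1 (tail G e)) (se F1 e) (st F1 e) (st F2 e)" for e
    by (simp_all add: S_def sheaf_sum_def)
  have cs: "\<And>w n1 n2. w \<in> cspace n1 \<Longrightarrow> w \<in> cspace (n1 + n2)"
    "\<And>w n1 n2. w \<in> cspace (n1 + n2) \<Longrightarrow> drop_coords n1 w \<in> cspace n2"
    "\<And>w n1 n2. w \<in> cspace n2 \<Longrightarrow> shift_coords n1 w \<in> cspace (n1 + n2)"
    by (auto simp: cspace_def drop_coords_def shift_coords_def)
  have sys: "\<And>F. incidence_system (arcs G \<times> UNIV) (phi G F) (secV G F) (secE G F)"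
    by (rule sheaf_incidence_system[OF G])
  have incl: "incidence_mor (arcs G \<times> UNIV) (phi G F1) (secV G F1) (secE G F1) (phi G S) (secV G S)
      (secE G S) (lift (verts G) (\<lambda>v w. w)) (lift (arcs G) (\<lambda>e w. w))"
    by (rule sheaf_lift_mor[OF G coord_linear_id coord_linear_id])
      (simp_all add: sel cs lin_blockdiag_first resH_def resT_def)
  have proj: "incidence_mor (arcs G \<times> UNIV) (phi G S) (secV G S) (secE G S) (phi G F2) (secV G F2)
      (secE G F2) (lift (verts G) (\<lambda>v. drop_coords (sv F1 v))) (lift (arcs G) (\<lambda>e. drop_coords (se F1 e)))"
    by (rule sheaf_lift_mor[OF G coord_linear_drop coord_linear_drop])
      (simp_all add: sel cs lin_blockdiag_drop resH_def resT_def)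
  have sect: "incidence_mor (arcs G \<times> UNIV) (phi G F2) (secV G F2) (secE G F2) (phi G S) (secV G S)
      (secE G S) (lift (verts G) (\<lambda>v. shift_coords (sv F1 v))) (lift (arcs G) (\<lambda>e. shift_coords (se F1 e)))"
    by (rule sheaf_lift_mor[OF G coord_linear_shift coord_linear_shift])
      (simp_all add: sel cs lin_blockdiag_shift resH_def resT_def)
  have exact: "exact_on (secV G F1) (secV G S) (secV G F2) (lift (verts G) (\<lambda>v w. w))
      (lift (verts G) (\<lambda>v. drop_coords (sv F1 v)))"
    "exact_on (secE G F1) (secE G S) (secE G F2) (lift (arcs G) (\<lambda>e w. w))
      (lift (arcs G) (\<lambda>e. drop_coords (se F1 e)))"
    unfolding secV_eq secE_eq sel by (simp_all add: lift_exact coords_split_exact)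
  have "\<forall>y\<in>secV G F2. lift (verts G) (\<lambda>v. drop_coords (sv F1 v)) (lift (verts G) (\<lambda>v. shift_coords (sv F1 v)) y) = y"
    "\<forall>y\<in>secE G F2. lift (arcs G) (\<lambda>e. drop_coords (se F1 e)) (lift (arcs G) (\<lambda>e. shift_coords (se F1 e)) y) = y"
    by (auto simp: lift_def drop_shift_coords secV_def secE_def fun_eq_iff)
  then show ?thesis
    unfolding split_exact_triple_def split_exact_triple_axioms_def exact_triple_def
    using sys incl proj sect exact by blast
qed

lemma triangular_8I:
  fixes a0 a1 a2 a3 a4 a5 a6 a7 :: int
  assumes "a1 \<le> a0 + a2" "a2 \<le> a1 + a3" "a3 \<le> a2 + a4" "a4 \<le> a3 + a5" "a5 \<le> a4 + a6" "a6 \<le> a5 + a7"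
  shows "triangular [a0, a1, a2, a3, a4, a5, a6, a7]"
  unfolding triangular_def
proof (intro allI impI)
  fix i assume "0 < i \<and> i + 1 < length [a0, a1, a2, a3, a4, a5, a6, a7]"
  then have "i = 1 \<or> i = 2 \<or> i = 3 \<or> i = 4 \<or> i = 5 \<or> i = 6" by auto
  then show "[a0, a1, a2, a3, a4, a5, a6, a7] ! i
      \<le> [a0, a1, a2, a3, a4, a5, a6, a7] ! (i - 1) + [a0, a1, a2, a3, a4, a5, a6, a7] ! (i + 1)"
    using assms by (elim disjE) (simp_all add: eval_nat_numeral)
qed

lemma alpha_maxexc:
  assumes G: "fin_digraph G"
  shows "alpha1 G F = maxexc (arcs G \<times> UNIV) (phi G F) (secV G F) (secE G F)"
    and "alpha0 G F = int (FS.dim (secV G F)) - int (FS.dim (secE G F))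
                        + maxexc (arcs G \<times> UNIV) (phi G F) (secV G F) (secE G F)"
  by (simp_all add: alpha1_def alpha0_def max_excess_eq euler_char_eq[OF G])

lemma alpha_nonneg:
  assumes G: "fin_digraph G"
  shows "0 \<le> alpha0 G F" "0 \<le> alpha1 G F"
  unfolding alpha_maxexc[OF G]
  using maxexc_nonneg[OF sheaf_incidence_system[OF G, of F]]
    maxexc_ge_euler[OF sheaf_incidence_system[OF G, of F]] by linarith+

lemma alpha_sheaf_sum:
  assumes G: "fin_digraph G"
  shows "alpha0 G (sheaf_sum G F1 F2) = alpha0 G F1 + alpha0 G F2"
    and "alpha1 G (sheaf_sum G F1 F2) = alpha1 G F1 + alpha1 G F2"
proof -
  note split = sheaf_sum_split_exact[OF G, of F1 F2]
  note triple = split_exact_triple.axioms(1)[OF split]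
  show "alpha1 G (sheaf_sum G F1 F2) = alpha1 G F1 + alpha1 G F2"
    using exact_triple.maxexc_subadditive[OF triple] split_exact_triple.maxexc_superadditive[OF split]
    by (simp add: alpha_maxexc[OF G])
  then show "alpha0 G (sheaf_sum G F1 F2) = alpha0 G F1 + alpha0 G F2"
    using exact_triple.dims_additive[OF triple] by (simp add: alpha_maxexc[OF G])
qed

text \<open>The six triangle inequalities: monotonicity, subadditivity and the quotient bound for the
  maximum excess, together with additivity of \<open>\<chi>\<close> and non-negativity of \<open>\<alpha>\<^sub>0\<close>.\<close>
lemma alpha_short_exact:
  assumes G: "fin_digraph G" and ex: "short_exact G F1 F2 F3 a b"
  shows "triangular [0, alpha1 G F1, alpha1 G F2, alpha1 G F3, alpha0 G F1, alpha0 G F2, alpha0 G F3, 0]"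
proof -
  note triple = sheaf_exact_triple[OF G ex]
  note mono = exact_triple.maxexc_mono[OF triple]
    and sub = exact_triple.maxexc_subadditive[OF triple]
    and quot = exact_triple.maxexc_quotient[OF triple]
    and dims = exact_triple.dims_additive[OF triple]
  note nonneg = alpha_nonneg[OF G, of F1] alpha_nonneg[OF G, of F3]
  show ?thesis
    by (rule triangular_8I) (use mono sub quot dims nonneg in \<open>simp_all add: alpha_maxexc[OF G]\<close>)
qed

theorem theorem1p5:
  fixes G :: "('v,'e) pre_digraph"
  assumes "fin_digraph G"
  shows "(\<forall>F :: ('v,'e,'a::field) sheaf. 0 \<le> alpha0 G F \<and> 0 \<le> alpha1 G F)
    \<and> (\<forall>F1 F2 :: ('v,'e,'a) sheaf.
         alpha0 G (sheaf_sum G F1 F2) = alpha0 G F1 + alpha0 G F2 \<and>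
         alpha1 G (sheaf_sum G F1 F2) = alpha1 G F1 + alpha1 G F2)
    \<and> (\<forall>(F1 :: ('v,'e,'a) sheaf) F2 F3 a b. short_exact G F1 F2 F3 a b \<longrightarrow>
         triangular [0, alpha1 G F1, alpha1 G F2, alpha1 G F3,
                        alpha0 G F1, alpha0 G F2, alpha0 G F3, 0])"
  using alpha_nonneg[OF assms] alpha_sheaf_sum[OF assms] alpha_short_exact[OF assms] by blast

end
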